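(* Let $n\ge 2$, let $\mathcal{V}=[n]$, and let $\mathcal{H}(\mathcal{V},\mathcal{E})$ be a connected comparison hypergraph whose hyperedges $e\in\mathcal{E}$ are subsets of $\mathcal{V}$ with $|e|\ge 2$. Let $\mathcal{X}\subset\mathbb{R}^d$ be compact. Assume: (i) the covariates $X_{e,j}\in\mathcal{X}$, $e\in\mathcal{E}$, $j\in e$, are independent and identically distributed with an absolutely continuous distribution $\rho_{\mathcal{X}}$ whose density is bounded away from zero and infinity on $\mathcal{X}$; (ii) every $f\in\mathcal{F}$ is a continuous function $\mathcal{X}\to\mathbb{R}$; (iii) every $f\in\mathcal{F}$ satisfies $\mathbb{E}_{X\sim\rho_{\mathcal{X}}}[f(X)]=0$. For $(\boldsymbol{u},f)\in\mathbb{U}^n\times\mathcal{F}$, where $\mathbb{U}^n=\{\boldsymbol{u}\in\mathbb{R}^n:\mathbf{1}^\top\boldsymbol{u}=0\}$, and a hyperedge $e$ with $m=|e|$, define $s_{e,j}(\boldsymbol{u},f)=u_j+f(X_{e,j})$ and, for a permutation $\pi=(\pi(1),\dots,\pi(m))$ of $e$ (with $\pi(i)$ the object ranked $i$-th), $$\mathbb{P}_{\boldsymbol{u},f}(\pi\mid\{X_{e,j}\}_{j\in e},e)=\prod_{j\in[m]}\frac{\exp(s_{e,\pi(j)}(\boldsymbol{u},f))}{\sum_{t=j}^m\exp(s_{e,\pi(t)}(\boldsymbol{u},f))}.$$ Let $\mathcal{Z}(e)=\mathsf{Perm}(e)\times\mathcal{X}^{|e|}$ and, for $z=(\pi,\{X_{e,j}\}_{j\in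 e})\in\mathcal{Z}(e)$, let $g_e(z;\boldsymbol{u},f)=\prod_{j\in e}\rho_{\mathcal{X}}(X_{e,j})\cdot\mathbb{P}_{\boldsymbol{u},f}(\pi\mid\{X_{e,j}\}_{j\in e},e)$. Then the model is identifiable: for any $(\boldsymbol{u},f)\neq(\boldsymbol{u}',f')$ in $\mathbb{U}^n\times\mathcal{F}$ there exist $e\in\mathcal{E}$ and a set $Z\subseteq\mathcal{Z}(e)$ of positive measure such that $\int_Z g_e(z;\boldsymbol{u},f)\,dz\neq\int_Z g_e(z;\boldsymbol{u}',f')\,dz$.
   Context: $\mathsf{Perm}(e)$ is the set of all bijections $[|e|]\to e$; here $\rho_{\mathcal{X}}$ also denotes the density of the covariate distribution. The measure on $\mathcal{Z}(e)$ is the product of counting measure on $\mathsf{Perm}(e)$ and Lebesgue measure on $\mathcal{X}^{|e|}$. *)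

theory Defs
  imports "HOL-Analysis.Analysis" "HOL-Combinatorics.Multiset_Permutations"
begin

definition hyper_adj :: "'v set set \<Rightarrow> ('v \<times> 'v) set" where
  "hyper_adj E = {(a, b). \<exists>e\<in>E. a \<in> e \<and> b \<in> e}"

definition comparison_hypergraph :: "'v set \<Rightarrow> 'v set set \<Rightarrow> bool" where
  "comparison_hypergraph V E \<longleftrightarrow> (\<forall>e\<in>E. e \<subseteq> V \<and> 2 \<le> card e)"

definition hyper_connected :: "'v set \<Rightarrow> 'v set set \<Rightarrow> bool" where
  "hyper_connected V E \<longleftrightarrow> (\<forall>i\<in>V. \<forall>j\<in>V. (i, j) \<in> (hyper_adj E)\<^sup>*)"

definition Ucent :: "nat \<Rightarrow> (nat \<Rightarrow> real) set" where
  "Ucent n = {u. (\<Sum>i\<in>{1..n}. u i) = 0 \<and> (\<forall>i. i \<notin> {1..n} \<longrightarrow> u i = 0)}"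

text \<open>Plackett--Luce probability of the ranking \<open>\<pi>\<close> (a list; \<open>\<pi> ! 0\<close> is ranked first)
  given covariates \<open>x j\<close> for \<open>j \<in> e\<close>; score \<open>s_j = u_j + f (x j)\<close>.\<close>
definition PL_prob :: "(nat \<Rightarrow> real) \<Rightarrow> ('a \<Rightarrow> real) \<Rightarrow> nat list \<Rightarrow> (nat \<Rightarrow> 'a) \<Rightarrow> real" where
  "PL_prob u f \<pi> x =
     (let m = length \<pi>; s = (\<lambda>j. u j + f (x j)) in
      \<Prod>i<m. exp (s (\<pi> ! i)) / (\<Sum>t\<in>{i..<m}. exp (s (\<pi> ! t))))"

definition Z_measure :: "nat set \<Rightarrow> (nat list \<times> (nat \<Rightarrow> 'a::euclidean_space)) measure" where
  "Z_measure e = count_space (permutations_of_set e) \<Otimes>\<^sub>M PiM e (\<lambda>_. lborel)"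

definition Z_space :: "nat set \<Rightarrow> 'a set \<Rightarrow> (nat list \<times> (nat \<Rightarrow> 'a)) set" where
  "Z_space e X = permutations_of_set e \<times> (e \<rightarrow>\<^sub>E X)"

definition g_dens :: "('a \<Rightarrow> real) \<Rightarrow> nat set \<Rightarrow> (nat \<Rightarrow> real) \<Rightarrow> ('a \<Rightarrow> real)
    \<Rightarrow> nat list \<times> (nat \<Rightarrow> 'a) \<Rightarrow> real" where
  "g_dens rho e u f z = (\<Prod>j\<in>e. rho (snd z j)) * PL_prob u f (fst z) (snd z)"

end

theory Submission
  imports Defs
begin

text \<open>If no hyperedge separates the two parameters, then on every hyperedge the two
  densities \<open>g\<^sub>e\<close> agree almost everywhere. Two rankings that differ only by swapping
  the last two objects \<open>a\<close>, \<open>b\<close> have probability ratio \<open>exp (s\<^sub>a - s\<^sub>b)\<close>, so with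
  \<open>k = f - f'\<close> the difference \<open>k (X\<^sub>a) - k (X\<^sub>b)\<close> is almost surely the constant
  \<open>d = (u'\<^sub>a - u'\<^sub>b) - (u\<^sub>a - u\<^sub>b)\<close>. As \<open>X\<^sub>a\<close>, \<open>X\<^sub>b\<close> are i.i.d. and \<open>k (X)\<close> is centred,
  \<open>E (k (X\<^sub>a) - k (X\<^sub>b) - d)\<^sup>2 = 2 E k (X)\<^sup>2 + d\<^sup>2\<close>, hence \<open>d = 0\<close> and \<open>f = f'\<close> almost
  everywhere on \<open>X\<close>, where the density is positive. Connectivity propagates
  \<open>u\<^sub>a - u\<^sub>b = u'\<^sub>a - u'\<^sub>b\<close> to all pairs of objects, and the centring \<open>1\<^sup>T u = 0\<close> then forces \<open>u = u'\<close>.\<close>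

lemma PL_prob_Nil: "PL_prob u f [] x = 1"
  by (simp add: PL_prob_def)

lemma PL_prob_Cons:
  "PL_prob u f (y # ys) x =
     exp (u y + f (x y)) / (\<Sum>z\<leftarrow>y # ys. exp (u z + f (x z))) * PL_prob u f ys x"
proof -
  define s where "s z = exp (u z + f (x z))" for z
  have PL: "PL_prob u f l x = (\<Prod>i<length l. s (l ! i) / (\<Sum>t\<in>{i..<length l}. s (l ! t)))" for l
    by (simp add: PL_prob_def Let_def s_def)
  have tail: "(\<Sum>t\<in>{Suc i..<Suc (length ys)}. s ((y # ys) ! t)) = (\<Sum>t\<in>{i..<length ys}. s (ys ! t))"
    for i by (simp only: sum.shift_bounds_Suc_ivl nth_Cons_Suc)
  have head: "(\<Sum>t\<in>{0..<length l}. s (l ! t)) = (\<Sum>z\<leftarrow>l. s z)" for l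
    by (simp add: sum_list_sum_nth)
  have "PL_prob u f (y # ys) x
      = (\<Prod>i<Suc (length ys). s ((y # ys) ! i) / (\<Sum>t\<in>{i..<Suc (length ys)}. s ((y # ys) ! t)))"
    by (simp add: PL)
  also have "\<dots> = s y / (\<Sum>t\<in>{0..<length (y # ys)}. s ((y # ys) ! t))
        * (\<Prod>i<length ys. s (ys ! i) / (\<Sum>t\<in>{Suc i..<Suc (length ys)}. s ((y # ys) ! t)))"
    by (subst prod.lessThan_Suc_shift) simp
  also have "\<dots> = s y / (\<Sum>z\<leftarrow>y # ys. s z) * PL_prob u f ys x"
    by (simp only: tail head PL)
  finally show ?thesis
    by (simp only: s_def)
qed

lemma PL_prob_pos: "0 < PL_prob u f \<pi> x"
proof (induction \<pi>)
  case Nil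
  then show ?case by (simp add: PL_prob_Nil)
next
  case (Cons y ys)
  have "0 \<le> (\<Sum>z\<leftarrow>ys. exp (u z + f (x z)))"
    by (rule sum_list_nonneg) auto
  then have "0 < exp (u y + f (x y)) + (\<Sum>z\<leftarrow>ys. exp (u z + f (x z)))"
    by (rule add_pos_nonneg[OF exp_gt_zero])
  with Cons show ?case by (simp add: PL_prob_Cons)
qed

lemma PL_prob_swap_last:
  "PL_prob u f (ys @ [a, b]) x * exp (u b + f (x b)) =
   PL_prob u f (ys @ [b, a]) x * exp (u a + f (x a))"
proof (induction ys)
  case Nil
  then show ?case by (simp add: PL_prob_Cons PL_prob_Nil ac_simps)
next
  case (Cons y ys)
  have "(\<Sum>z\<leftarrow>y # ys @ [a, b]. exp (u z + f (x z))) = (\<Sum>z\<leftarrow>y # ys @ [b, a]. exp (u z + f (x z)))"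
    by simp
  then show ?case
    unfolding append_Cons PL_prob_Cons by (simp only: mult.assoc Cons.IH)
qed

lemma score_difference_eq_if_PL_prob_eq:
  assumes "PL_prob u f (ys @ [a, b]) x = PL_prob u' f' (ys @ [a, b]) x"
    and "PL_prob u f (ys @ [b, a]) x = PL_prob u' f' (ys @ [b, a]) x"
  shows "u a + f (x a) - (u b + f (x b)) = u' a + f' (x a) - (u' b + f' (x b))"
proof -
  have ratio: "exp (v a + h (x a) - (v b + h (x b)))
      = PL_prob v h (ys @ [a, b]) x / PL_prob v h (ys @ [b, a]) x" for v h
    using PL_prob_swap_last[of v h ys a b x] PL_prob_pos[of v h "ys @ [b, a]" x]
    by (simp add: exp_diff field_simps)
  have "exp (u a + f (x a) - (u b + f (x b))) = exp (u' a + f' (x a) - (u' b + f' (x b)))"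
    unfolding ratio assms ..
  then show ?thesis by simp
qed

lemma PL_prob_cong:
  "(\<And>j. j \<in> set \<pi> \<Longrightarrow> f (x j) = f' (x j)) \<Longrightarrow> PL_prob u f \<pi> x = PL_prob u f' \<pi> x"
  unfolding PL_prob_def Let_def by (intro prod.cong sum.cong arg_cong2[where f="(/)"] refl) auto

lemma (in sigma_finite_measure) AE_eq_if_set_nn_integrals_eq_on_positive_subsets:
  assumes [measurable]: "f \<in> borel_measurable M" "g \<in> borel_measurable M" "S \<in> sets M"
    and f0: "\<And>x. x \<in> space M \<Longrightarrow> x \<notin> S \<Longrightarrow> f x = 0"
    and g0: "\<And>x. x \<in> space M \<Longrightarrow> x \<notin> S \<Longrightarrow> g x = 0"
    and eq: "\<And>A. A \<in> sets M \<Longrightarrow> A \<subseteq> S \<Longrightarrow> 0 < emeasure M A \<Longrightarrow>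
               (\<integral>\<^sup>+x\<in>A. f x \<partial>M) = (\<integral>\<^sup>+x\<in>A. g x \<partial>M)"
  shows "AE x in M. f x = g x"
proof (rule density_unique2)
  fix A assume A: "A \<in> sets M"
  have restrict: "(\<integral>\<^sup>+x\<in>A. h x \<partial>M) = (\<integral>\<^sup>+x\<in>A \<inter> S. h x \<partial>M)"
    if "\<And>x. x \<in> space M \<Longrightarrow> x \<notin> S \<Longrightarrow> h x = 0" for h :: "_ \<Rightarrow> ennreal"
    by (rule nn_integral_cong) (auto simp: indicator_def that)
  show "(\<integral>\<^sup>+x\<in>A. f x \<partial>M) = (\<integral>\<^sup>+x\<in>A. g x \<partial>M)"
  proof (cases "emeasure M (A \<inter> S) = 0")
    case True
    then have "A \<inter> S \<in> null_sets M" using A by auto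
    then show ?thesis by (simp add: restrict[OF f0] restrict[OF g0] nn_integral_null_set)
  next
    case False
    then show ?thesis using A eq[of "A \<inter> S"]
      by (simp add: restrict[OF f0] restrict[OF g0] zero_less_iff_neq_zero)
  qed
qed simp_all

lemma integrable_mult_continuous_on_compact_support:
  fixes rho h :: "'a::euclidean_space \<Rightarrow> real"
  assumes X: "compact X" and rho: "integrable lborel rho" "\<And>x. x \<notin> X \<Longrightarrow> rho x = 0"
    and h: "continuous_on X h"
  shows "integrable lborel (\<lambda>x. rho x * h x)"
proof -
  obtain B where B: "\<And>x. x \<in> X \<Longrightarrow> \<bar>h x\<bar> \<le> B"
    using compact_imp_bounded[OF compact_continuous_image[OF h X]] by (auto simp: bounded_real)
  have restrict: "(\<lambda>x. rho x * h x) = (\<lambda>x. rho x * (indicator X x * h x))"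
    using rho(2) by (auto split: split_indicator)
  have "(\<lambda>x. indicator X x * h x) \<in> borel_measurable borel"
    using borel_measurable_continuous_on_indicator[OF borel_closed[OF compact_imp_closed[OF X]] h]
    by simp
  then have meas: "(\<lambda>x. rho x * h x) \<in> borel_measurable lborel"
    unfolding restrict using rho(1) by measurable
  have "\<bar>rho x * h x\<bar> \<le> \<bar>B * rho x\<bar>" for x
    using B[of x] rho(2)[of x]
    by (cases "x \<in> X") (auto simp: abs_mult mult.commute intro: mult_right_mono)
  then show ?thesis
    by (intro Bochner_Integration.integrable_bound[OF _ meas, of "\<lambda>x. B * rho x"]) (auto simp: rho)
qed

lemma prod_remove_two:
  assumes "finite A" "a \<in> A" "b \<in> A" "a \<noteq> b"
  shows "prod g A = g a * g b * prod g (A - {a, b})"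
proof -
  have "prod g A = g a * prod g (A - {a})"
    using assms by (intro prod.remove)
  also have "prod g (A - {a}) = g b * prod g (A - {a} - {b})"
    using assms by (intro prod.remove) auto
  also have "A - {a} - {b} = A - {a, b}"
    by blast
  finally show ?thesis
    by (simp only: mult.assoc)
qed

context
  fixes M :: "'a measure" and e :: "'i set" and a b :: 'i
  assumes M: "sigma_finite_measure M"
    and e: "finite e" "a \<in> e" "b \<in> e" "a \<noteq> b"
begin

lemma
  fixes p q r :: "'a \<Rightarrow> real"
  assumes "integrable M p" "integrable M q" "integrable M r"
  shows integrable_PiM_two_coordinates:
      "integrable (PiM e (\<lambda>_. M)) (\<lambda>y. p (y a) * q (y b) * (\<Prod>j\<in>e - {a, b}. r (y j)))"
    and integral_PiM_two_coordinates:
      "(\<integral>y. p (y a) * q (y b) * (\<Prod>j\<in>e - {a, b}. r (y j)) \<partial>PiM e (\<lambda>_. M))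
        = integral\<^sup>L M p * integral\<^sup>L M q * integral\<^sup>L M r ^ (card e - 2)"
proof -
  interpret product_sigma_finite "\<lambda>_::'i. M"
    using M by (simp add: product_sigma_finite_def)
  define F where "F j = (if j = a then p else if j = b then q else r)" for j
  have F: "integrable M (F j)" for j
    using assms by (simp add: F_def)
  have prod_F: "(\<Prod>j\<in>e. G j (F j)) = G a p * G b q * (\<Prod>j\<in>e - {a, b}. G j r)"
    for G :: "'i \<Rightarrow> ('a \<Rightarrow> real) \<Rightarrow> real"
  proof -
    have "(\<Prod>j\<in>e - {a, b}. G j (F j)) = (\<Prod>j\<in>e - {a, b}. G j r)"
      by (rule prod.cong) (auto simp: F_def)
    then show ?thesis
      using e by (simp add: prod_remove_two[OF e] F_def)
  qed
  have prod_F_apply: "(\<Prod>j\<in>e. F j (y j)) = p (y a) * q (y b) * (\<Prod>j\<in>e - {a, b}. r (y j))" for y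
    using prod_F[of "\<lambda>j h. h (y j)"] by simp
  show "integrable (PiM e (\<lambda>_. M)) (\<lambda>y. p (y a) * q (y b) * (\<Prod>j\<in>e - {a, b}. r (y j)))"
    using product_integrable_prod[of e F] e F by (simp add: prod_F_apply)
  have "card (e - {a, b}) = card e - 2"
    using e by (simp add: card_Diff_subset)
  then show "(\<integral>y. p (y a) * q (y b) * (\<Prod>j\<in>e - {a, b}. r (y j)) \<partial>PiM e (\<lambda>_. M))
        = integral\<^sup>L M p * integral\<^sup>L M q * integral\<^sup>L M r ^ (card e - 2)"
    using product_integral_prod[of e F] e F prod_F[of "\<lambda>_. integral\<^sup>L M"]
    by (simp add: prod_F_apply)
qed

lemma integral_PiM_density_square_difference:
  fixes rho k :: "'a \<Rightarrow> real" and d :: real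
  assumes rho: "integrable M rho" "integral\<^sup>L M rho = 1"
    and rk: "integrable M (\<lambda>x. rho x * k x)" "(\<integral>x. rho x * k x \<partial>M) = 0"
    and rk2: "integrable M (\<lambda>x. rho x * (k x)\<^sup>2)"
  shows "(\<integral>y. (\<Prod>j\<in>e. rho (y j)) * (k (y a) - k (y b) - d)\<^sup>2 \<partial>PiM e (\<lambda>_. M))
        = 2 * (\<integral>x. rho x * (k x)\<^sup>2 \<partial>M) + d\<^sup>2"
proof -
  define T where "T p q y = p (y a) * q (y b) * (\<Prod>j\<in>e - {a, b}. rho (y j))"
    for p q :: "'a \<Rightarrow> real" and y
  define rk where "rk x = rho x * k x" for x
  define rk2 where "rk2 x = rho x * (k x)\<^sup>2" for x
  have expand: "(\<lambda>y. (\<Prod>j\<in>e. rho (y j)) * (k (y a) - k (y b) - d)\<^sup>2)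
      = (\<lambda>y. T rk2 rho y + T rho rk2 y + d\<^sup>2 * T rho rho y
              - 2 * T rk rk y - 2 * d * T rk rho y + 2 * d * T rho rk y)"
    by (rule ext)
      (simp add: T_def rk_def rk2_def prod_remove_two[OF e] power2_eq_square algebra_simps)
  have ints: "integrable M rho" "integrable M rk" "integrable M rk2"
    using rho rk rk2 by (simp_all add: rk_def[abs_def] rk2_def[abs_def])
  have vals: "integral\<^sup>L M rho = 1" "integral\<^sup>L M rk = 0"
    using rho rk by (simp_all add: rk_def[abs_def])
  have T: "integrable (PiM e (\<lambda>_. M)) (T p q)"
      "integral\<^sup>L (PiM e (\<lambda>_. M)) (T p q) = integral\<^sup>L M p * integral\<^sup>L M q"
    if "integrable M p" "integrable M q" for p q
    unfolding T_def[abs_def] using that rho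
    by (simp_all add: integrable_PiM_two_coordinates integral_PiM_two_coordinates)
  show "(\<integral>y. (\<Prod>j\<in>e. rho (y j)) * (k (y a) - k (y b) - d)\<^sup>2 \<partial>PiM e (\<lambda>_. M))
        = 2 * (\<integral>x. rho x * (k x)\<^sup>2 \<partial>M) + d\<^sup>2"
    unfolding expand using ints
    by (simp add: T vals rk2_def[symmetric])
qed

lemma
  fixes rho k :: "'a \<Rightarrow> real" and d :: real
  assumes rho: "\<And>x. 0 \<le> rho x" "integrable M rho" "integral\<^sup>L M rho = 1"
    and rk: "integrable M (\<lambda>x. rho x * k x)" "(\<integral>x. rho x * k x \<partial>M) = 0"
    and rk2: "integrable M (\<lambda>x. rho x * (k x)\<^sup>2)"
    and diff: "AE y in PiM e (\<lambda>_. M). (\<forall>j\<in>e. rho (y j) \<noteq> 0) \<longrightarrow> k (y a) - k (y b) = d"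
  shows AE_difference_const_imp_const_eq_0: "d = 0"
    and AE_difference_const_imp_AE_eq_0: "AE x in M. rho x \<noteq> 0 \<longrightarrow> k x = 0"
proof -
  define V where "V = (\<integral>x. rho x * (k x)\<^sup>2 \<partial>M)"
  have "AE y in PiM e (\<lambda>_. M). (\<Prod>j\<in>e. rho (y j)) * (k (y a) - k (y b) - d)\<^sup>2 = 0"
    using diff by eventually_elim (auto simp: e(1))
  then have "(\<integral>y. (\<Prod>j\<in>e. rho (y j)) * (k (y a) - k (y b) - d)\<^sup>2 \<partial>PiM e (\<lambda>_. M)) = 0"
    by (rule integral_eq_zero_AE)
  then have "2 * V + d\<^sup>2 = 0"
    unfolding V_def using integral_PiM_density_square_difference[OF rho(2,3) rk rk2] by simp
  moreover have "0 \<le> V"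
    unfolding V_def using rho(1) by (intro Bochner_Integration.integral_nonneg) simp
  ultimately have "d\<^sup>2 = 0" and V: "V = 0"
    using zero_le_power2[of d] by linarith+
  then show "d = 0"
    by simp
  have "AE x in M. rho x * (k x)\<^sup>2 = 0"
    using V rk2 rho(1) unfolding V_def by (subst (asm) integral_nonneg_eq_0_iff_AE) auto
  then show "AE x in M. rho x \<noteq> 0 \<longrightarrow> k x = 0"
    by eventually_elim auto
qed

end

lemma g_dens_nonneg: "(\<And>x. 0 \<le> rho x) \<Longrightarrow> 0 \<le> g_dens rho e u f z"
  unfolding g_dens_def using PL_prob_pos[of u f "fst z" "snd z"]
  by (intro mult_nonneg_nonneg prod_nonneg) auto

lemma g_dens_eq_0: "finite e \<Longrightarrow> j \<in> e \<Longrightarrow> rho (snd z j) = 0 \<Longrightarrow> g_dens rho e u f z = 0"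
  unfolding g_dens_def by (subst prod_zero) auto

lemma g_dens_cong:
  "set (fst z) = e \<Longrightarrow> (\<And>j. j \<in> e \<Longrightarrow> f (snd z j) = h (snd z j))
    \<Longrightarrow> g_dens rho e u f z = g_dens rho e u h z"
  unfolding g_dens_def by (intro arg_cong[where f="(*) _"] PL_prob_cong) auto

lemma borel_measurable_g_dens:
  fixes f :: "'a::euclidean_space \<Rightarrow> real"
  assumes [measurable]: "f \<in> borel_measurable borel" "rho \<in> borel_measurable borel"
    and e: "finite e"
  shows "g_dens rho e u f \<in> borel_measurable (Z_measure e)"
  unfolding Z_measure_def
proof (rule measurable_pair_measure_countable1)
  show "countable (permutations_of_set e)"
    using e by (simp add: countable_finite)
  fix \<pi> assume "\<pi> \<in> permutations_of_set e"
  then have "set \<pi> = e"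
    by (simp add: permutations_of_set_def)
  then have [measurable]: "(\<lambda>y. y (\<pi> ! i)) \<in> borel_measurable (PiM e (\<lambda>_. lborel))"
    if "i < length \<pi>" for i
    using that by (intro measurable_component_singleton[THEN measurable_compose]) auto
  show "(\<lambda>y. g_dens rho e u f (\<pi>, y)) \<in> borel_measurable (PiM e (\<lambda>_. lborel))"
    unfolding g_dens_def PL_prob_def Let_def fst_conv snd_conv
    by (intro borel_measurable_times borel_measurable_prod borel_measurable_divide
        borel_measurable_sum borel_measurable_exp borel_measurable_add)
      (auto intro: measurable_compose[OF _ assms(1)] measurable_compose[OF _ assms(2)]
        measurable_component_singleton[THEN measurable_compose])
qed

lemma sigma_finite_measure_Z_measure:
  assumes "finite e"
  shows "sigma_finite_measure (Z_measure e :: (nat list \<times> (nat \<Rightarrow> 'a::euclidean_space)) measure)"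
proof -
  interpret product_sigma_finite "\<lambda>_::nat. lborel :: 'a measure"
    by unfold_locales
  show ?thesis
    unfolding Z_measure_def using assms
    by (intro sigma_finite_pair_measure sigma_finite_measure_count_space_finite sigma_finite)
      simp_all
qed

lemma AE_PiM_if_AE_Z_measure:
  fixes P :: "nat list \<times> (nat \<Rightarrow> 'a::euclidean_space) \<Rightarrow> bool"
  assumes e: "finite e" and AE: "AE z in Z_measure e. P z" and \<pi>: "\<pi> \<in> permutations_of_set e"
  shows "AE y in PiM e (\<lambda>_. lborel). P (\<pi>, y)"
proof -
  interpret product_sigma_finite "\<lambda>_::nat. lborel :: 'a measure"
    by unfold_locales
  interpret pair_sigma_finite "count_space (permutations_of_set e)"
      "PiM e (\<lambda>_. lborel :: 'a measure)"
    using e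
    by (intro pair_sigma_finite.intro sigma_finite_measure_count_space_finite sigma_finite) simp_all
  from AE_pair[OF AE[unfolded Z_measure_def]] \<pi> show ?thesis
    by (simp add: AE_count_space)
qed

lemma AE_g_dens_eq_if_set_integrals_eq:
  fixes X :: "'a::euclidean_space set" and f f' :: "'a \<Rightarrow> real"
  assumes e: "finite e" and X: "closed X"
    and rho: "rho \<in> borel_measurable lborel" "\<And>x. 0 \<le> rho x" "\<And>x. x \<notin> X \<Longrightarrow> rho x = 0"
    and f: "continuous_on X f" "continuous_on X f'"
    and eq: "\<And>Z. Z \<in> sets (Z_measure e) \<Longrightarrow> Z \<subseteq> Z_space e X \<Longrightarrow> 0 < emeasure (Z_measure e) Z \<Longrightarrow>
      (\<integral>\<^sup>+z\<in>Z. ennreal (g_dens rho e u f z) \<partial>Z_measure e)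
        = (\<integral>\<^sup>+z\<in>Z. ennreal (g_dens rho e u' f' z) \<partial>Z_measure e)"
  shows "AE z in Z_measure e. g_dens rho e u f z = g_dens rho e u' f' z"
proof -
  interpret sigma_finite_measure "Z_measure e :: (nat list \<times> (nat \<Rightarrow> 'a)) measure"
    using e by (rule sigma_finite_measure_Z_measure)
  have space: "space (Z_measure e) = permutations_of_set e \<times> (e \<rightarrow>\<^sub>E UNIV)"
    by (simp add: Z_measure_def space_pair_measure space_PiM)
  have outside: "g_dens rho e v h z = 0"
    if "z \<in> space (Z_measure e)" "z \<notin> Z_space e X" for v h z
  proof -
    from that have "snd z \<in> e \<rightarrow>\<^sub>E UNIV" "snd z \<notin> e \<rightarrow>\<^sub>E X"
      by (auto simp: space Z_space_def mem_Times_iff)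
    then obtain j where "j \<in> e" "snd z j \<notin> X"
      by (auto simp: PiE_iff)
    then show ?thesis
      using e rho(3) by (intro g_dens_eq_0) auto
  qed
  have meas: "(\<lambda>z. ennreal (g_dens rho e v h z)) \<in> borel_measurable (Z_measure e)"
    if h: "continuous_on X h" for v h
  proof -
    \<comment> \<open>\<open>h\<close> need not be measurable off \<open>X\<close>, but there \<open>rho\<close> vanishes, so \<open>h\<close> may be
      replaced by its extension by zero.\<close>
    define h0 where "h0 x = indicator X x * h x" for x
    have "h0 \<in> borel_measurable borel"
      using borel_measurable_continuous_on_indicator[OF borel_closed[OF X] h]
      by (simp add: h0_def[abs_def])
    then have "g_dens rho e v h0 \<in> borel_measurable (Z_measure e)"
      using rho(1) e by (intro borel_measurable_g_dens) simp_all
    moreover have "g_dens rho e v h0 z = g_dens rho e v h z" if "z \<in> space (Z_measure e)" for z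
    proof (cases "z \<in> Z_space e X")
      case True
      then show ?thesis
        by (intro g_dens_cong) (auto simp: h0_def Z_space_def permutations_of_set_def PiE_iff)
    next
      case False
      then show ?thesis
        using outside that by simp
    qed
    ultimately have "g_dens rho e v h \<in> borel_measurable (Z_measure e)"
      using measurable_cong[of "Z_measure e" "g_dens rho e v h0" "g_dens rho e v h"] by simp
    then show ?thesis
      by simp
  qed
  have "Z_space e X \<in> sets (Z_measure e)"
    unfolding Z_measure_def Z_space_def using e X
    by (intro pair_measureI sets_PiM_I_finite) auto
  then have "AE z in Z_measure e. ennreal (g_dens rho e u f z) = ennreal (g_dens rho e u' f' z)"
    by (intro AE_eq_if_set_nn_integrals_eq_on_positive_subsets meas f eq) (simp_all add: outside)
  then show ?thesis
    by eventually_elim (simp add: g_dens_nonneg rho(2))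
qed

lemma AE_score_difference_eq:
  fixes rho f f' :: "'a::euclidean_space \<Rightarrow> real"
  assumes e: "finite e" "a \<in> e" "b \<in> e" "a \<noteq> b"
    and AE: "AE z in Z_measure e. g_dens rho e u f z = g_dens rho e u' f' z"
  shows "AE y in PiM e (\<lambda>_. lborel). (\<forall>j\<in>e. rho (y j) \<noteq> 0) \<longrightarrow>
           f (y a) - f' (y a) - (f (y b) - f' (y b)) = (u' a - u' b) - (u a - u b)"
proof -
  define ys where "ys = sorted_list_of_set (e - {a, b})"
  have "ys @ [a, b] \<in> permutations_of_set e" "ys @ [b, a] \<in> permutations_of_set e"
    using e by (auto simp: ys_def permutations_of_set_def)
  from this[THEN AE_PiM_if_AE_Z_measure[OF e(1) AE]]
  show ?thesis
  proof eventually_elim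
    case (elim y)
    show ?case
    proof
      assume "\<forall>j\<in>e. rho (y j) \<noteq> 0"
      then have "(\<Prod>j\<in>e. rho (y j)) \<noteq> 0"
        using e(1) by simp
      then have "PL_prob u f (ys @ [a, b]) y = PL_prob u' f' (ys @ [a, b]) y"
          and "PL_prob u f (ys @ [b, a]) y = PL_prob u' f' (ys @ [b, a]) y"
        using elim by (simp_all add: g_dens_def)
      from score_difference_eq_if_PL_prob_eq[OF this]
      show "f (y a) - f' (y a) - (f (y b) - f' (y b)) = (u' a - u' b) - (u a - u b)"
        by linarith
    qed
  qed
qed

lemma hyperedge_parameters_eq_if_set_integrals_eq:
  fixes X :: "'a::euclidean_space set" and rho f f' :: "'a \<Rightarrow> real"
  assumes e: "finite e" "a \<in> e" "b \<in> e" "a \<noteq> b" and X: "compact X"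
    and rho: "rho \<in> borel_measurable lborel" "\<And>x. 0 \<le> rho x" "\<And>x. x \<notin> X \<Longrightarrow> rho x = 0"
      "(\<integral>\<^sup>+x. ennreal (rho x) \<partial>lborel) = 1" "\<And>x. x \<in> X \<Longrightarrow> 0 < rho x"
    and f: "continuous_on X f" "continuous_on X f'"
    and mean: "(\<integral>x. rho x * f x \<partial>lborel) = 0" "(\<integral>x. rho x * f' x \<partial>lborel) = 0"
    and eq: "\<And>Z. Z \<in> sets (Z_measure e) \<Longrightarrow> Z \<subseteq> Z_space e X \<Longrightarrow> 0 < emeasure (Z_measure e) Z \<Longrightarrow>
      (\<integral>\<^sup>+z\<in>Z. ennreal (g_dens rho e u f z) \<partial>Z_measure e)
        = (\<integral>\<^sup>+z\<in>Z. ennreal (g_dens rho e u' f' z) \<partial>Z_measure e)"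
  shows "u a - u b = u' a - u' b" and "emeasure lborel {x\<in>X. f x \<noteq> f' x} = 0"
proof -
  define k where "k x = f x - f' x" for x
  have rho_int: "integrable lborel rho"
    using rho by (intro integrableI_nonneg) auto
  have rho_1: "integral\<^sup>L lborel rho = 1"
    using nn_integral_eq_integral[OF rho_int] rho(2,4) by simp
  have int: "integrable lborel (\<lambda>x. rho x * h x)" if "continuous_on X h" for h
    using X rho_int rho(3) that by (rule integrable_mult_continuous_on_compact_support)
  have k: "continuous_on X k" "continuous_on X (\<lambda>x. (k x)\<^sup>2)"
    using f by (auto simp: k_def intro!: continuous_intros)
  have rk: "integrable lborel (\<lambda>x. rho x * k x)" "(\<integral>x. rho x * k x \<partial>lborel) = 0"
    using int[OF f(1)] int[OF f(2)] mean by (simp_all add: k_def right_diff_distrib)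
  have "AE y in PiM e (\<lambda>_. lborel). (\<forall>j\<in>e. rho (y j) \<noteq> 0) \<longrightarrow>
           k (y a) - k (y b) = (u' a - u' b) - (u a - u b)"
    unfolding k_def using e
    by (rule AE_score_difference_eq[OF _ _ _ _
          AE_g_dens_eq_if_set_integrals_eq[OF e(1) compact_imp_closed[OF X] rho(1-3) f eq]])
  note iid = lborel.sigma_finite_measure_axioms e rho(2) rho_int rho_1 rk int[OF k(2)] this
  from AE_difference_const_imp_const_eq_0[OF iid] show "u a - u b = u' a - u' b"
    by simp
  from AE_difference_const_imp_AE_eq_0[OF iid] obtain N where
    N: "{x \<in> space lborel. \<not> (rho x \<noteq> 0 \<longrightarrow> k x = 0)} \<subseteq> N" "emeasure lborel N = 0" "N \<in> sets lborel"
    by (rule AE_E)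
  have "{x\<in>X. f x \<noteq> f' x} \<subseteq> N"
    using N(1) rho(5) by (force simp: k_def)
  then show "emeasure lborel {x\<in>X. f x \<noteq> f' x} = 0"
    using N(2,3) emeasure_mono by (metis le_zero_eq)
qed

lemma Ucent_eq_if_hyperedge_differences_eq:
  assumes conn: "hyper_connected {1..n} E" and u: "u \<in> Ucent n" "u' \<in> Ucent n"
    and diff: "\<And>e a b. e \<in> E \<Longrightarrow> a \<in> e \<Longrightarrow> b \<in> e \<Longrightarrow> u a - u b = u' a - u' b"
  shows "u = u'"
proof
  fix i
  define w where "w j = u j - u' j" for j
  have "w j = w l" if "(j, l) \<in> (hyper_adj E)\<^sup>*" for j l
    using that by induction (auto simp: w_def hyper_adj_def dest: diff)
  then have const: "w j = w l" if "j \<in> {1..n}" "l \<in> {1..n}" for j l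
    using conn that by (auto simp: hyper_connected_def)
  have "w i = 0" if i: "i \<in> {1..n}"
  proof -
    have "(\<Sum>j\<in>{1..n}. w j) = 0"
      using u by (simp add: w_def Ucent_def sum_subtractf)
    moreover have "(\<Sum>j\<in>{1..n}. w j) = real n * w i"
      using const[OF _ i] by simp
    moreover have "n \<noteq> 0"
      using i by simp
    ultimately show ?thesis
      by simp
  qed
  then show "u i = u' i"
    using u by (cases "i \<in> {1..n}") (auto simp: w_def Ucent_def)
qed

lemma hyper_connected_obtains_hyperedge:
  fixes E :: "nat set set"
  assumes "comparison_hypergraph {1..n} E" "hyper_connected {1..n} E" "2 \<le> n"
  obtains e a b where "e \<in> E" "a \<in> e" "b \<in> e" "a \<noteq> b"
proof -
  have "(1, 2) \<in> (hyper_adj E)\<^sup>*"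
    using assms(2,3) by (auto simp: hyper_connected_def)
  then obtain i where "(1, i) \<in> hyper_adj E"
    by (cases rule: converse_rtranclE) auto
  then obtain e where e: "e \<in> E"
    by (auto simp: hyper_adj_def)
  then have "2 \<le> card e"
    using assms(1) by (simp add: comparison_hypergraph_def)
  with e that show ?thesis
    by (auto simp: numeral_2_eq_2 card_le_Suc_iff)
qed

theorem theorem1:
  fixes n :: nat and E :: "nat set set" and X :: "'a::euclidean_space set"
    and rho :: "'a \<Rightarrow> real" and F :: "('a \<Rightarrow> real) set"
  assumes n2: "2 \<le> n"
    and hyp: "comparison_hypergraph {1..n} E"
    and conn: "hyper_connected {1..n} E"
    and Xcpt: "compact X"
    and rho_meas: "rho \<in> borel_measurable lborel"
    and rho_nonneg: "\<forall>x. 0 \<le> rho x"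
    and rho_supp: "\<forall>x. x \<notin> X \<longrightarrow> rho x = 0"
    and rho_prob: "(\<integral>\<^sup>+ x. ennreal (rho x) \<partial>lborel) = 1"
    and rho_bdd: "\<exists>c C. 0 < c \<and> (\<forall>x\<in>X. c \<le> rho x \<and> rho x \<le> C)"
    and F_cont: "\<forall>f\<in>F. continuous_on X f"
    and F_mean: "\<forall>f\<in>F. (\<integral> x. rho x * f x \<partial>lborel) = 0"
    and u: "u \<in> Ucent n" and u': "u' \<in> Ucent n"
    and f: "f \<in> F" and f': "f' \<in> F"
    and ne: "u \<noteq> u' \<or> emeasure lborel {x\<in>X. f x \<noteq> f' x} > 0"
  shows "\<exists>e\<in>E. \<exists>Z. Z \<in> sets (Z_measure e) \<and> Z \<subseteq> Z_space e X
            \<and> emeasure (Z_measure e) Z > 0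
            \<and> (\<integral>\<^sup>+ z. ennreal (g_dens rho e u f z) * indicator Z z \<partial>Z_measure e)
              \<noteq> (\<integral>\<^sup>+ z. ennreal (g_dens rho e u' f' z) * indicator Z z \<partial>Z_measure e)"
proof (rule ccontr)
  assume no_witness: "\<not> ?thesis"
  have eq: "(\<integral>\<^sup>+z\<in>Z. ennreal (g_dens rho e u f z) \<partial>Z_measure e)
      = (\<integral>\<^sup>+z\<in>Z. ennreal (g_dens rho e u' f' z) \<partial>Z_measure e)"
    if "e \<in> E" "Z \<in> sets (Z_measure e)" "Z \<subseteq> Z_space e X" "0 < emeasure (Z_measure e) Z" for e Z
    using no_witness that by blast
  have rho_pos: "0 < rho x" if "x \<in> X" for x
    using rho_bdd that by (auto intro: less_le_trans)
  have edge: "u a - u b = u' a - u' b \<and> emeasure lborel {x\<in>X. f x \<noteq> f' x} = 0"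
    if e: "e \<in> E" "a \<in> e" "b \<in> e" "a \<noteq> b" for e a b
  proof -
    have "finite e"
      using hyp e(1) by (intro card_ge_0_finite) (auto simp: comparison_hypergraph_def)
    from hyperedge_parameters_eq_if_set_integrals_eq[OF this e(2-4) Xcpt rho_meas
        rho_nonneg[rule_format] rho_supp[rule_format] rho_prob rho_pos
        F_cont[rule_format, OF f] F_cont[rule_format, OF f']
        F_mean[rule_format, OF f] F_mean[rule_format, OF f'] eq[OF e(1)]]
    show ?thesis ..
  qed
  have "u = u'"
  proof (rule Ucent_eq_if_hyperedge_differences_eq[OF conn u u'])
    fix e a b assume "e \<in> E" "a \<in> e" "b \<in> e"
    then show "u a - u b = u' a - u' b"
      using edge by (cases "a = b") auto
  qed
  obtain e a b where ab: "e \<in> E" "a \<in> e" "b \<in> e" "a \<noteq> b"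
    using hyp conn n2 by (rule hyper_connected_obtains_hyperedge)
  show False
    using edge[OF ab] ne \<open>u = u'\<close> by simp
qed

end
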